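(* Let $R$ be a principal ideal domain and let $a\in R$ be a nonzero non-unit. Then the left ideal $Ra$ is completely prime if and only if $a$ is c-irreducible.
   Context: A principal ideal domain (PID) is a (not necessarily commutative) domain in which every left ideal and every right ideal is principal. A left ideal $\mathfrak{p}$ is completely prime if $\mathfrak{p}\neq R$ and, for $a,b\in R$, $ab\in\mathfrak{p}$ and $\mathfrak{p}b\subseteq\mathfrak{p}$ imply $a\in\mathfrak{p}$ or $b\in\mathfrak{p}$. Elements $b,c$ are similar if $R/Rb\cong R/Rc$ as left $R$-modules. A nonzero $a$ is c-reducible if $a=bb'=c'c$ for some non-units $b,b',c',c\in R$ with $b$ similar to $c$; an element that is not c-reducible is c-irreducible. *)

theory Defs
  imports Main
begin

text \<open>Ambient ring: type class ring_1_no_zero_divisors = (not necessarily commutative)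
  ring with 1, 0 \<noteq> 1, no zero divisors, i.e. a domain.\<close>

definition left_ideal :: "'a::ring_1 set \<Rightarrow> bool" where
  "left_ideal I \<longleftrightarrow> 0 \<in> I \<and> (\<forall>x\<in>I. \<forall>y\<in>I. x + y \<in> I) \<and> (\<forall>x\<in>I. - x \<in> I)
     \<and> (\<forall>r. \<forall>x\<in>I. r * x \<in> I)"

definition right_ideal :: "'a::ring_1 set \<Rightarrow> bool" where
  "right_ideal I \<longleftrightarrow> 0 \<in> I \<and> (\<forall>x\<in>I. \<forall>y\<in>I. x + y \<in> I) \<and> (\<forall>x\<in>I. - x \<in> I)
     \<and> (\<forall>r. \<forall>x\<in>I. x * r \<in> I)"

definition lprinc :: "'a::ring_1 \<Rightarrow> 'a set" where
  "lprinc a = {r * a | r. True}"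

definition rprinc :: "'a::ring_1 \<Rightarrow> 'a set" where
  "rprinc a = {a * r | r. True}"

definition is_PID :: "'a::ring_1_no_zero_divisors itself \<Rightarrow> bool" where
  "is_PID _ \<longleftrightarrow> (\<forall>I::'a set. left_ideal I \<longrightarrow> (\<exists>g. I = lprinc g))
              \<and> (\<forall>I::'a set. right_ideal I \<longrightarrow> (\<exists>g. I = rprinc g))"

definition ring_unit :: "'a::ring_1 \<Rightarrow> bool" where
  "ring_unit u \<longleftrightarrow> (\<exists>v. u * v = 1 \<and> v * u = 1)"

definition completely_prime :: "'a::ring_1 set \<Rightarrow> bool" where
  "completely_prime P \<longleftrightarrow> P \<noteq> UNIV \<and>
     (\<forall>a b. a * b \<in> P \<and> (\<forall>x\<in>P. x * b \<in> P) \<longrightarrow> a \<in> P \<or> b \<in> P)"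

text \<open>R/Rb \<cong> R/Rc as left R-modules.  Such an isomorphism is the same as a
  surjective left R-module homomorphism f : R \<rightarrow> R/Rc with kernel Rb (first
  isomorphism theorem); f is given on representatives, equalities being taken
  modulo Rc.\<close>
definition similar :: "'a::ring_1 \<Rightarrow> 'a \<Rightarrow> bool" where
  "similar b c \<longleftrightarrow> (\<exists>f :: 'a \<Rightarrow> 'a.
      (\<forall>x y. f (x + y) - (f x + f y) \<in> lprinc c)
    \<and> (\<forall>r x. f (r * x) - r * f x \<in> lprinc c)
    \<and> (\<forall>x. f x \<in> lprinc c \<longleftrightarrow> x \<in> lprinc b)
    \<and> (\<forall>y. \<exists>x. f x - y \<in> lprinc c))"

definition c_reducible :: "'a::ring_1 \<Rightarrow> bool" where
  "c_reducible a \<longleftrightarrow> a \<noteq> 0 \<and> (\<exists>b b' c' c. \<not> ring_unit b \<and> \<not> ring_unit b' \<and>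
      \<not> ring_unit c' \<and> \<not> ring_unit c \<and> a = b * b' \<and> a = c' * c \<and> similar b c)"

definition c_irreducible :: "'a::ring_1 \<Rightarrow> bool" where
  "c_irreducible a \<longleftrightarrow> \<not> c_reducible a"

end

theory Submission
  imports Defs
begin

text \<open>Every left module homomorphism \<open>R \<rightarrow> R/Rc\<close> is right multiplication by some \<open>u\<close>, so
  a similarity of \<open>b\<close> and \<open>c\<close> is an element \<open>u\<close> with \<open>(Rc : u) = Rb\<close> and \<open>Ru + Rc = R\<close>.

  If \<open>Ra\<close> is completely prime and \<open>a = bb' = c'c\<close> with \<open>b\<close> similar to \<open>c\<close>, pick \<open>s\<close> with
  \<open>(Rb : s) = Rc\<close> and put \<open>z = sb'\<close>; then \<open>Ra z \<subseteq> Ra\<close> and \<open>cz \<in> Ra\<close>, so \<open>c \<in> Ra\<close> or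
  \<open>z \<in> Ra\<close>, making \<open>c'\<close> or \<open>c\<close> a unit.

  Conversely, if \<open>xy \<in> Ra\<close>, \<open>Ra y \<subseteq> Ra\<close> and \<open>x, y \<notin> Ra\<close>, write \<open>(Ra : y) = Rc\<close> and
  \<open>Ry + Ra = Rd\<close>. Then \<open>a = c'c = bd\<close> and \<open>R/Rc \<cong> Rd/Ra \<cong> R/Rb\<close>. All four factors are
  non-units; for \<open>d\<close> this is the Noetherian fact that the surjective endomorphism
  \<open>r \<mapsto> ry\<close> of \<open>R/Ra\<close> would be injective, whereas it kills \<open>x\<close>.\<close>

lemma left_ideal_zero: "left_ideal I \<Longrightarrow> 0 \<in> I"
  by (simp add: left_ideal_def)

lemma left_ideal_add: "left_ideal I \<Longrightarrow> x \<in> I \<Longrightarrow> y \<in> I \<Longrightarrow> x + y \<in> I"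
  by (simp add: left_ideal_def)

lemma left_ideal_uminus: "left_ideal I \<Longrightarrow> x \<in> I \<Longrightarrow> - x \<in> I"
  by (simp add: left_ideal_def)

lemma left_ideal_mult_left: "left_ideal I \<Longrightarrow> x \<in> I \<Longrightarrow> r * x \<in> I"
  by (simp add: left_ideal_def)

lemma left_ideal_diff: "left_ideal I \<Longrightarrow> x \<in> I \<Longrightarrow> y \<in> I \<Longrightarrow> x - y \<in> I"
  by (metis diff_conv_add_uminus left_ideal_add left_ideal_uminus)

lemma left_ideal_diff_mem_iff:
  assumes "left_ideal I" and "x - y \<in> I"
  shows "x \<in> I \<longleftrightarrow> y \<in> I"
proof
  assume "x \<in> I"
  then have "x - (x - y) \<in> I"
    using assms left_ideal_diff by blast
  then show "y \<in> I"
    by simp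
next
  assume "y \<in> I"
  then have "(x - y) + y \<in> I"
    using assms left_ideal_add by blast
  then show "x \<in> I"
    by simp
qed

lemma left_ideal_colon:
  assumes "left_ideal I"
  shows "left_ideal {r. r * y \<in> I}"
  using assms unfolding left_ideal_def
  by (simp add: distrib_right mult.assoc)

lemma left_ideal_UN_mono:
  fixes I :: "nat \<Rightarrow> 'a::ring_1 set"
  assumes "mono I" and ideal: "\<And>n. left_ideal (I n)"
  shows "left_ideal (\<Union>n. I n)"
  unfolding left_ideal_def
proof (intro conjI ballI allI)
  show "0 \<in> (\<Union>n. I n)"
    using ideal left_ideal_zero by blast
next
  fix x y assume "x \<in> (\<Union>n. I n)" "y \<in> (\<Union>n. I n)"
  then obtain m n where "x \<in> I m" "y \<in> I n"
    by blast
  then have "x \<in> I (max m n)" "y \<in> I (max m n)"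
    using \<open>mono I\<close> by (auto dest: monoD[of I m "max m n"] monoD[of I n "max m n"])
  then show "x + y \<in> (\<Union>n. I n)"
    using ideal left_ideal_add by blast
next
  fix x assume "x \<in> (\<Union>n. I n)"
  then show "- x \<in> (\<Union>n. I n)"
    using ideal left_ideal_uminus by blast
next
  fix r x assume "x \<in> (\<Union>n. I n)"
  then show "r * x \<in> (\<Union>n. I n)"
    using ideal left_ideal_mult_left by blast
qed

lemma lprinc_iff: "x \<in> lprinc a \<longleftrightarrow> (\<exists>r. x = r * a)"
  by (simp add: lprinc_def)

lemma lprinc_self: "a \<in> lprinc a"
  by (metis lprinc_iff mult_1_left)

lemma left_ideal_lprinc: "left_ideal (lprinc a)"
  unfolding left_ideal_def
proof (intro conjI ballI allI)
  show "0 \<in> lprinc a"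
    unfolding lprinc_iff by (metis mult_zero_left)
next
  fix x y assume "x \<in> lprinc a" "y \<in> lprinc a"
  then show "x + y \<in> lprinc a"
    unfolding lprinc_iff by (metis distrib_right)
next
  fix x assume "x \<in> lprinc a"
  then show "- x \<in> lprinc a"
    unfolding lprinc_iff by (metis minus_mult_left)
next
  fix t x assume "x \<in> lprinc a"
  then show "t * x \<in> lprinc a"
    unfolding lprinc_iff by (metis mult.assoc)
qed

lemma left_ideal_lprinc_sum: "left_ideal {r * y + q * a | r q. True}"
  unfolding left_ideal_def
proof (intro conjI ballI allI)
  have "0 = 0 * y + 0 * a"
    by simp
  then show "0 \<in> {r * y + q * a | r q. True}"
    by blast
next
  fix u v assume "u \<in> {r * y + q * a | r q. True}" "v \<in> {r * y + q * a | r q. True}"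
  then obtain r q r' q' where "u = r * y + q * a" "v = r' * y + q' * a"
    by blast
  then have "u + v = (r + r') * y + (q + q') * a"
    by (simp add: algebra_simps)
  then show "u + v \<in> {r * y + q * a | r q. True}"
    by blast
next
  fix u assume "u \<in> {r * y + q * a | r q. True}"
  then obtain r q where "u = r * y + q * a"
    by blast
  then have "- u = (- r) * y + (- q) * a"
    by simp
  then show "- u \<in> {r * y + q * a | r q. True}"
    by blast
next
  fix t u assume "u \<in> {r * y + q * a | r q. True}"
  then obtain r q where "u = r * y + q * a"
    by blast
  then have "t * u = (t * r) * y + (t * q) * a"
    by (simp add: distrib_left mult.assoc)
  then show "t * u \<in> {r * y + q * a | r q. True}"
    by blast
qed

lemma lprinc_unit_mult:
  assumes "ring_unit u"
  shows "lprinc (u * c) = lprinc c"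
proof -
  obtain v where v: "v * u = 1"
    using assms unfolding ring_unit_def by blast
  have "x \<in> lprinc (u * c) \<longleftrightarrow> x \<in> lprinc c" for x
  proof
    assume "x \<in> lprinc (u * c)"
    then obtain r where "x = (r * u) * c"
      unfolding lprinc_iff by (auto simp: mult.assoc)
    then show "x \<in> lprinc c"
      unfolding lprinc_iff by blast
  next
    assume "x \<in> lprinc c"
    then obtain r where "x = r * c"
      unfolding lprinc_iff by blast
    then have "x = (r * v) * (u * c)"
      using v by (simp add: mult.assoc flip: mult.assoc[of v u c])
    then show "x \<in> lprinc (u * c)"
      unfolding lprinc_iff by blast
  qed
  then show ?thesis
    by blast
qed

lemma ring_unit_if_left_inverse:
  fixes c r :: "'a::ring_1_no_zero_divisors"
  assumes "r * c = 1"
  shows "ring_unit c"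
proof -
  have "(c * r - 1) * c = 0"
    using assms by (simp add: left_diff_distrib mult.assoc)
  moreover have "c \<noteq> 0"
    using assms by auto
  ultimately have "c * r = 1"
    by simp
  then show ?thesis
    unfolding ring_unit_def using assms by blast
qed

lemma one_in_lprinc_iff:
  fixes c :: "'a::ring_1_no_zero_divisors"
  shows "1 \<in> lprinc c \<longleftrightarrow> ring_unit c"
  by (metis lprinc_iff ring_unit_def ring_unit_if_left_inverse)

lemma lprinc_mult_cancel_right:
  fixes b d :: "'a::ring_1_no_zero_divisors"
  assumes "d \<noteq> 0"
  shows "r * d \<in> lprinc (b * d) \<longleftrightarrow> r \<in> lprinc b"
  using assms unfolding lprinc_iff by (metis mult.assoc mult_cancel_right)

lemma similar_iff_right_mult:
  "similar b c \<longleftrightarrow>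
     (\<exists>u. (\<forall>r. r * u \<in> lprinc c \<longleftrightarrow> r \<in> lprinc b) \<and> (\<forall>z. \<exists>s. s * u - z \<in> lprinc c))"
proof
  assume "similar b c"
  then obtain f where f_hom: "\<And>r x. f (r * x) - r * f x \<in> lprinc c"
    and f_ker: "\<And>x. f x \<in> lprinc c \<longleftrightarrow> x \<in> lprinc b"
    and f_surj: "\<And>z. \<exists>x. f x - z \<in> lprinc c"
    unfolding similar_def by blast
  have f_eq: "f r - r * f 1 \<in> lprinc c" for r
    using f_hom[of r 1] by simp
  have "r * f 1 \<in> lprinc c \<longleftrightarrow> r \<in> lprinc b" for r
    using f_ker left_ideal_diff_mem_iff[OF left_ideal_lprinc f_eq] by blast
  moreover have "\<exists>s. s * f 1 - z \<in> lprinc c" for z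
  proof -
    obtain s where "f s - z \<in> lprinc c"
      using f_surj by blast
    moreover have "s * f 1 - z = (f s - z) - (f s - s * f 1)"
      by simp
    ultimately show ?thesis
      using f_eq left_ideal_diff[OF left_ideal_lprinc] by metis
  qed
  ultimately show "\<exists>u. (\<forall>r. r * u \<in> lprinc c \<longleftrightarrow> r \<in> lprinc b) \<and> (\<forall>z. \<exists>s. s * u - z \<in> lprinc c)"
    by blast
next
  assume "\<exists>u. (\<forall>r. r * u \<in> lprinc c \<longleftrightarrow> r \<in> lprinc b) \<and> (\<forall>z. \<exists>s. s * u - z \<in> lprinc c)"
  then obtain u where "\<forall>r. r * u \<in> lprinc c \<longleftrightarrow> r \<in> lprinc b" "\<forall>z. \<exists>s. s * u - z \<in> lprinc c"
    by blast
  then show "similar b c"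
    unfolding similar_def
    by (intro exI[of _ "\<lambda>r. r * u"]) (simp add: distrib_right mult.assoc left_ideal_zero left_ideal_lprinc)
qed

lemma similar_obtains_inverse_multiplier:
  assumes "similar b c"
  obtains s where "\<And>y. y * s \<in> lprinc b \<longleftrightarrow> y \<in> lprinc c"
proof -
  obtain u s where u_ker: "\<And>r. r * u \<in> lprinc c \<longleftrightarrow> r \<in> lprinc b"
    and s_u: "s * u - 1 \<in> lprinc c"
    using assms unfolding similar_iff_right_mult by blast
  have "y * s \<in> lprinc b \<longleftrightarrow> y \<in> lprinc c" for y
  proof -
    have "y * s * u - y = y * (s * u - 1)"
      by (simp add: right_diff_distrib mult.assoc)
    then have "y * s * u - y \<in> lprinc c"
      using s_u left_ideal_mult_left[OF left_ideal_lprinc] by metis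
    then show ?thesis
      using u_ker left_ideal_diff_mem_iff[OF left_ideal_lprinc] by blast
  qed
  then show thesis
    using that by blast
qed

lemma c_irreducible_if_completely_prime:
  fixes a :: "'a::ring_1_no_zero_divisors"
  assumes "a \<noteq> 0" and prime: "completely_prime (lprinc a)"
  shows "c_irreducible a"
  unfolding c_irreducible_def
proof
  assume "c_reducible a"
  then obtain b b' c' c where units: "\<not> ring_unit c'" "\<not> ring_unit c"
    and ab: "a = b * b'" and ac: "a = c' * c" and "similar b c"
    unfolding c_reducible_def by blast
  obtain s where s: "\<And>y. y * s \<in> lprinc b \<longleftrightarrow> y \<in> lprinc c"
    using similar_obtains_inverse_multiplier[OF \<open>similar b c\<close>] by blast
  have "b' \<noteq> 0" "c \<noteq> 0"
    using \<open>a \<noteq> 0\<close> ab ac by auto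
  obtain r where r: "c * s = r * b"
    using s[of c] lprinc_self lprinc_iff by blast
  define z where "z = s * b'"
  have "c * z = r * a"
    using r ab by (simp add: z_def mult.assoc[symmetric])
  then have cz: "c * z \<in> lprinc a"
    using lprinc_iff by blast
  have "a * z = c' * (c * s) * b'"
    using ac by (simp add: z_def mult.assoc)
  also have "\<dots> = (c' * r) * a"
    using r ab by (simp add: mult.assoc)
  finally have az: "a * z = (c' * r) * a" .
  have "\<forall>x\<in>lprinc a. x * z \<in> lprinc a"
  proof
    fix x assume "x \<in> lprinc a"
    then obtain t where "x = t * a"
      unfolding lprinc_iff by blast
    then have "x * z = (t * c' * r) * a"
      using az by (simp add: mult.assoc)
    then show "x * z \<in> lprinc a"
      unfolding lprinc_iff by blast
  qed
  then have "c \<in> lprinc a \<or> z \<in> lprinc a"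
    using prime cz unfolding completely_prime_def by blast
  then show False
  proof
    assume "c \<in> lprinc a"
    then have "1 \<in> lprinc c'"
      using ac lprinc_mult_cancel_right[OF \<open>c \<noteq> 0\<close>, of 1 c'] by simp
    then show False
      using units one_in_lprinc_iff by blast
  next
    assume "z \<in> lprinc a"
    then have "1 * s \<in> lprinc b"
      using ab lprinc_mult_cancel_right[OF \<open>b' \<noteq> 0\<close>] by (simp add: z_def)
    then show False
      using units s one_in_lprinc_iff by blast
  qed
qed

lemma PID_left_ideal_principal:
  fixes I :: "'a::ring_1_no_zero_divisors set"
  assumes "is_PID TYPE('a)" and "left_ideal I"
  obtains g where "I = lprinc g"
  using assms unfolding is_PID_def by blast

lemma lprinc_subset_left_ideal:
  assumes "left_ideal I" and "g \<in> I"
  shows "lprinc g \<subseteq> I"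
  using assms left_ideal_mult_left by (auto simp: lprinc_iff)

lemma PID_left_ideal_chain_stabilizes:
  fixes I :: "nat \<Rightarrow> 'a::ring_1_no_zero_divisors set"
  assumes "is_PID TYPE('a)" and "mono I" and ideal: "\<And>n. left_ideal (I n)"
  obtains N where "\<And>n. I n \<subseteq> I N"
proof -
  obtain g where g: "(\<Union>n. I n) = lprinc g"
    using PID_left_ideal_principal[OF assms(1) left_ideal_UN_mono[OF assms(2,3)]] .
  then obtain N where "g \<in> I N"
    using lprinc_self by blast
  then have "lprinc g \<subseteq> I N"
    using lprinc_subset_left_ideal ideal by blast
  then show thesis
    using that g by blast
qed

lemma right_mult_pow_closed:
  fixes y :: "'a::monoid_mult"
  assumes "\<And>t. t \<in> I \<Longrightarrow> t * y \<in> I" and "t \<in> I"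
  shows "t * y ^ n \<in> I"
proof (induction n)
  case 0
  show ?case using assms(2) by simp
next
  case (Suc n)
  then show ?case
    using assms(1) by (metis mult.assoc power_Suc2)
qed

lemma right_mult_pow_surj:
  fixes y :: "'a::ring_1"
  assumes "left_ideal I" and stable: "\<And>t. t \<in> I \<Longrightarrow> t * y \<in> I"
    and surj: "\<And>z. \<exists>w. z - w * y \<in> I"
  shows "\<exists>w. z - w * y ^ n \<in> I"
proof (induction n arbitrary: z)
  case 0
  show ?case
    using left_ideal_zero[OF assms(1)] by (intro exI[of _ z]) simp
next
  case (Suc n)
  obtain w where w: "z - w * y ^ n \<in> I"
    using Suc by blast
  obtain w' where w': "w - w' * y \<in> I"
    using surj by blast
  have "(w - w' * y) * y ^ n \<in> I"
    using right_mult_pow_closed[OF stable w'] .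
  moreover have "z - w' * y ^ Suc n = (z - w * y ^ n) + (w - w' * y) * y ^ n"
    by (simp add: left_diff_distrib mult.assoc power_commutes)
  ultimately show ?case
    using w left_ideal_add[OF assms(1)] by metis
qed

text \<open>A surjective endomorphism of the Noetherian module \<open>R/I\<close> is injective: the kernels
  \<open>(I : y\<^sup>n)\<close> of its powers stabilise.\<close>

lemma PID_right_mult_surj_imp_inj:
  fixes y :: "'a::ring_1_no_zero_divisors"
  assumes pid: "is_PID TYPE('a)" and "left_ideal I"
    and stable: "\<And>t. t \<in> I \<Longrightarrow> t * y \<in> I"
    and surj: "\<And>z. \<exists>w. z - w * y \<in> I"
    and "x * y \<in> I"
  shows "x \<in> I"
proof -
  define K where "K n = {r. r * y ^ n \<in> I}" for n
  have "K n \<subseteq> K (Suc n)" for n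
    unfolding K_def using stable by (auto simp: power_Suc2 mult.assoc[symmetric] simp del: power_Suc)
  then have "mono K"
    unfolding mono_iff_le_Suc by blast
  moreover have "left_ideal (K n)" for n
    unfolding K_def using left_ideal_colon[OF \<open>left_ideal I\<close>] .
  ultimately obtain N where N: "\<And>n. K n \<subseteq> K N"
    using PID_left_ideal_chain_stabilizes[OF pid] by blast
  obtain w where w: "x - w * y ^ N \<in> I"
    using right_mult_pow_surj[OF \<open>left_ideal I\<close> stable surj] by blast
  have "(x - w * y ^ N) * y \<in> I"
    using stable[OF w] .
  moreover have "(x - w * y ^ N) * y = x * y - w * y ^ Suc N"
    by (simp add: left_diff_distrib mult.assoc power_commutes)
  ultimately have "w * y ^ Suc N \<in> I"
    using left_ideal_diff_mem_iff[OF \<open>left_ideal I\<close>] \<open>x * y \<in> I\<close> by metis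
  then have "w * y ^ N \<in> I"
    using N[of "Suc N"] unfolding K_def by blast
  then show ?thesis
    using left_ideal_diff_mem_iff[OF \<open>left_ideal I\<close> w] by blast
qed

lemma PID_one_notin_lprinc_sum:
  fixes a :: "'a::ring_1_no_zero_divisors"
  assumes pid: "is_PID TYPE('a)"
    and "x * y \<in> lprinc a" and stable: "\<forall>t\<in>lprinc a. t * y \<in> lprinc a"
    and "x \<notin> lprinc a"
  shows "1 \<notin> {r * y + q * a | r q. True}"
proof
  assume "1 \<in> {r * y + q * a | r q. True}"
  then obtain p q where "1 = p * y + q * a"
    by blast
  then have "z - (z * p) * y = (z * q) * a" for z
    by (metis add_diff_cancel_left' distrib_left mult.assoc mult_1_right)
  then have "\<exists>w. z - w * y \<in> lprinc a" for z
    unfolding lprinc_iff by blast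
  then show False
    using PID_right_mult_surj_imp_inj[OF pid left_ideal_lprinc] stable assms(2,4) by blast
qed

text \<open>\<open>R/Rc \<cong> Rd/Ra \<cong> R/Rb\<close>, via \<open>r \<mapsto> ry\<close> and \<open>rd \<mapsfrom> r\<close>; writing \<open>d = vy + wa\<close>, the
  composite \<open>R \<rightarrow> R/Rc\<close> is right multiplication by \<open>v\<close>.\<close>

lemma similar_if_colon_and_sum:
  fixes a :: "'a::ring_1_no_zero_divisors"
  assumes colon: "lprinc c = {r. r * y \<in> lprinc a}"
    and sum: "lprinc d = {r * y + q * a | r q. True}"
    and ab: "a = b * d" and "d \<noteq> 0"
  shows "similar b c"
proof -
  obtain v w where dvw: "d = v * y + w * a"
    using sum lprinc_self by blast
  have "1 * y + 0 * a \<in> lprinc d"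
    unfolding sum by blast
  then obtain u where yu: "y = u * d"
    by (auto simp: lprinc_iff)
  show ?thesis
    unfolding similar_iff_right_mult
  proof (rule exI[of _ v], intro conjI allI)
    fix r
    have "r * d - r * v * y = (r * w) * a"
      using dvw by (simp add: distrib_left mult.assoc)
    then have "r * d - r * v * y \<in> lprinc a"
      unfolding lprinc_iff by blast
    then have "r * d \<in> lprinc a \<longleftrightarrow> r * v * y \<in> lprinc a"
      by (rule left_ideal_diff_mem_iff[OF left_ideal_lprinc])
    moreover have "r * d \<in> lprinc a \<longleftrightarrow> r \<in> lprinc b"
      using ab lprinc_mult_cancel_right[OF \<open>d \<noteq> 0\<close>] by simp
    ultimately show "r * v \<in> lprinc c \<longleftrightarrow> r \<in> lprinc b"
      using colon by blast
  next
    fix r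
    have "(r * u * v - r) * y = r * u * (v * y - d)"
      using yu by (simp add: left_diff_distrib right_diff_distrib mult.assoc)
    also have "\<dots> = (- (r * u * w)) * a"
      using dvw by (simp add: mult.assoc)
    finally have "r * u * v - r \<in> lprinc c"
      unfolding colon lprinc_iff by blast
    then show "\<exists>s. s * v - r \<in> lprinc c"
      by blast
  qed
qed

lemma c_reducible_if_not_completely_prime:
  fixes a :: "'a::ring_1_no_zero_divisors"
  assumes pid: "is_PID TYPE('a)" and "a \<noteq> 0"
    and "x * y \<in> lprinc a" and stable: "\<forall>t\<in>lprinc a. t * y \<in> lprinc a"
    and "x \<notin> lprinc a" and "y \<notin> lprinc a"
  shows "c_reducible a"
proof -
  obtain c where colon: "lprinc c = {r. r * y \<in> lprinc a}"
    using PID_left_ideal_principal[OF pid left_ideal_colon[OF left_ideal_lprinc]] by metis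
  obtain d where sum: "lprinc d = {r * y + q * a | r q. True}"
    using PID_left_ideal_principal[OF pid left_ideal_lprinc_sum] by metis
  have "a \<in> lprinc c"
    unfolding colon using stable lprinc_self by blast
  then obtain c' where ac: "a = c' * c"
    unfolding lprinc_iff by blast
  have "0 * y + 1 * a \<in> lprinc d" "1 * y + 0 * a \<in> lprinc d"
    unfolding sum by blast+
  then obtain b u where ab: "a = b * d" and yu: "y = u * d"
    by (auto simp: lprinc_iff)
  have "d \<noteq> 0"
    using ab \<open>a \<noteq> 0\<close> by auto
  have "\<not> ring_unit d"
    using PID_one_notin_lprinc_sum[OF assms(1,3,4,5)] sum one_in_lprinc_iff by blast
  moreover have "\<not> ring_unit b"
  proof
    assume "ring_unit b"
    then have "y \<in> lprinc a"
      using ab yu lprinc_unit_mult[of b d] by (simp add: lprinc_iff)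
    then show False
      using \<open>y \<notin> lprinc a\<close> by blast
  qed
  moreover have "\<not> ring_unit c"
  proof
    assume "ring_unit c"
    then have "1 \<in> lprinc c"
      using one_in_lprinc_iff by blast
    then show False
      using colon \<open>y \<notin> lprinc a\<close> by simp
  qed
  moreover have "\<not> ring_unit c'"
  proof
    assume "ring_unit c'"
    then have "lprinc a = lprinc c"
      using ac lprinc_unit_mult by blast
    then show False
      using colon \<open>x * y \<in> lprinc a\<close> \<open>x \<notin> lprinc a\<close> by blast
  qed
  moreover have "similar b c"
    using similar_if_colon_and_sum[OF colon sum ab \<open>d \<noteq> 0\<close>] .
  ultimately show ?thesis
    unfolding c_reducible_def using \<open>a \<noteq> 0\<close> ab ac by blast
qed

theorem proposition3p5:
  fixes a :: "'a::ring_1_no_zero_divisors"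
  assumes "is_PID TYPE('a)"
    and "a \<noteq> 0"
    and "\<not> ring_unit a"
  shows "completely_prime (lprinc a) \<longleftrightarrow> c_irreducible a"
proof
  assume "completely_prime (lprinc a)"
  then show "c_irreducible a"
    by (rule c_irreducible_if_completely_prime[OF assms(2)])
next
  assume irreducible: "c_irreducible a"
  have "lprinc a \<noteq> UNIV"
    using assms(3) one_in_lprinc_iff by blast
  moreover have "x \<in> lprinc a \<or> y \<in> lprinc a"
    if "x * y \<in> lprinc a" and "\<forall>t\<in>lprinc a. t * y \<in> lprinc a" for x y
    using c_reducible_if_not_completely_prime[OF assms(1,2) that] irreducible
    unfolding c_irreducible_def by blast
  ultimately show "completely_prime (lprinc a)"
    unfolding completely_prime_def by blast
qed

end
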